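(* For every lattice point $p\in\mathbb Z^n$: $p\in P_G^{-}(y_1,\dots,y_m)$ if and only if $p+e_1$ is a good point of $P_G(y_1,\dots,y_m)$.
   Context: Let $m,n$ be positive integers and $G\subseteq K_{m,n}$ a bipartite graph without isolated vertices, with left vertices $1,\dots,m$ and right vertices $\bar1,\dots,\bar n$. For $i\in[m]$ let $I_i\subseteq[n]$ be the set of $j$ with $(i,\bar j)$ an edge of $G$. For $I\subseteq[n]$ let $\Delta_I=\mathrm{conv}(e_k:k\in I)\subset\mathbb R^n$. For nonnegative integers $y_1,\dots,y_m$, $P_G=P_G(y_1,\dots,y_m)=y_1\Delta_{I_1}+\cdots+y_m\Delta_{I_m}$ (Minkowski sum); it lies in the hyperplane $H=\{x:\sum_kx_k=\sum_jy_j\}$. The trimmed generalized permutohedron is $P_G^-(y_1,\dots,y_m)=\{x\in\mathbb R^n: x+\Delta_{[n]}\subseteq P_G\}$. Fix $c>0$ sufficiently large and let $\infty_1=(\sum_jy_j+(n-1)c,-c,\dots,-c)\in H$. For a polytope $Q\subseteq H$, a facet $F$ of $Q$ is negative if the hyperplane (inside $H$) defining $F$ separates $\infty_1$ from the interior of $Q$, and positive otherwise. A point of $Q$ is good if it lies on no positive facet of $Q$.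
   Formalization: The polytope $P_G(y_1,\dots,y_m)$ is also assumed to be full-dimensional in the hyperplane H, that is of affine dimension n-1. The statement above fails without it. *)

theory Defs
  imports "HOL-Analysis.Analysis"
begin

text \<open>Points of R^n are vectors of type real^'n, n = CARD('n).
  Left vertices are 1..m; I i is the set of right neighbours of left vertex i.\<close>

definition simplexI :: "'n::finite set \<Rightarrow> (real^'n) set" where
  "simplexI J = convex hull {axis k 1 | k. k \<in> J}"

definition PG :: "nat \<Rightarrow> (nat \<Rightarrow> 'n::finite set) \<Rightarrow> (nat \<Rightarrow> nat) \<Rightarrow> (real^'n) set" where
  "PG m I y = {(\<Sum>i\<in>{1..m}. z i) | z. \<forall>i\<in>{1..m}. z i \<in> (\<lambda>v. real (y i) *\<^sub>R v) ` simplexI (I i)}"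

definition PG_trim :: "nat \<Rightarrow> (nat \<Rightarrow> 'n::finite set) \<Rightarrow> (nat \<Rightarrow> nat) \<Rightarrow> (real^'n) set" where
  "PG_trim m I y = {x. (\<lambda>v. x + v) ` simplexI (UNIV :: 'n set) \<subseteq> PG m I y}"

definition Hyp :: "nat \<Rightarrow> (nat \<Rightarrow> nat) \<Rightarrow> (real^'n::finite) set" where
  "Hyp m y = {x. (\<Sum>k\<in>UNIV. x $ k) = real (\<Sum>j\<in>{1..m}. y j)}"

text \<open>The point infinity_1; the coordinate labelled 1 is k1.\<close>
definition infty1 :: "nat \<Rightarrow> (nat \<Rightarrow> nat) \<Rightarrow> real \<Rightarrow> 'n::finite \<Rightarrow> real^'n" where
  "infty1 m y c k1 = (\<chi> k. if k = k1
      then real (\<Sum>j\<in>{1..m}. y j) + (real CARD('n) - 1) * c else - c)"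

definition negative_facet :: "(real^'n::finite) set \<Rightarrow> (real^'n) \<Rightarrow> (real^'n) set \<Rightarrow> (real^'n) set \<Rightarrow> bool" where
  "negative_facet H w Q F \<longleftrightarrow> F facet_of Q \<and>
     (\<exists>a b. aff_dim (H \<inter> {x. a \<bullet> x = b}) = aff_dim H - 1 \<and>
            Q \<subseteq> {x. a \<bullet> x \<le> b} \<and> F = Q \<inter> {x. a \<bullet> x = b} \<and>
            rel_interior Q \<subseteq> {x. a \<bullet> x < b} \<and> a \<bullet> w > b)"

definition positive_facet :: "(real^'n::finite) set \<Rightarrow> (real^'n) \<Rightarrow> (real^'n) set \<Rightarrow> (real^'n) set \<Rightarrow> bool" where
  "positive_facet H w Q F \<longleftrightarrow> F facet_of Q \<and> \<not> negative_facet H w Q F"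

definition good_point :: "(real^'n::finite) set \<Rightarrow> (real^'n) \<Rightarrow> (real^'n) set \<Rightarrow> (real^'n) \<Rightarrow> bool" where
  "good_point H w Q x \<longleftrightarrow> x \<in> Q \<and> (\<forall>F. positive_facet H w Q F \<longrightarrow> x \<notin> F)"

end

theory Submission
  imports Defs
begin

text \<open>Inside the hyperplane \<open>H\<close>, \<open>P_G\<close> satisfies the inequalities
  \<open>\<Sum>k\<in>S. x_k \<le> f(S)\<close>, where \<open>f(S)\<close> is the total weight of the left vertices adjacent
  to \<open>S\<close>, and every facet is the equality set of one of them for a proper nonempty \<open>S\<close>: take
  for \<open>S\<close> the coordinates where an outer facet normal is largest. Since \<open>\<infinity>\<^sub>1\<close> is very
  large in coordinate \<open>1\<close> and negative elsewhere, the facet of \<open>S\<close> is negative exactly when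
  \<open>1 \<in> S\<close>, for every \<open>c > 0\<close>.

  If all \<open>p + e\<^sub>k\<close> lie in \<open>P_G\<close>, then \<open>p + e\<^sub>1\<close> lies on no facet with \<open>1 \<notin> S\<close>,
  because \<open>p + e\<^sub>k\<close> for \<open>k \<in> S\<close> would exceed \<open>f(S)\<close> by one. Conversely, if some
  \<open>p + e\<^sub>k\<close> is not in \<open>P_G\<close>, it violates the inequality of some facet \<open>S\<close>; as all
  quantities are integers, this forces \<open>k \<in> S\<close>, \<open>1 \<notin> S\<close> and \<open>p + e\<^sub>1\<close> on that
  positive facet.\<close>

section \<open>Facets of a convex set\<close>

lemma facet_of_eq_face:
  fixes Q :: "'a::euclidean_space set"
  assumes "convex Q" "F facet_of Q" "G face_of Q" "F \<subseteq> G" "G \<noteq> Q"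
  shows "F = G"
proof (rule ccontr)
  assume "F \<noteq> G"
  have "F face_of G"
    using assms by (meson face_of_subset facet_of_imp_face_of face_of_imp_subset)
  then have "aff_dim F < aff_dim G"
    using \<open>F \<noteq> G\<close> assms(3) face_of_aff_dim_lt face_of_imp_convex by blast
  moreover have "aff_dim G < aff_dim Q"
    using assms face_of_aff_dim_lt by blast
  ultimately show False
    using assms(2) by (simp add: facet_of_def)
qed

lemma affine_hull_facet:
  fixes Q :: "'a::euclidean_space set"
  assumes "F facet_of Q" "Q \<subseteq> {x. a \<bullet> x \<le> b}" "F = Q \<inter> {x. a \<bullet> x = b}"
  shows "affine hull F = affine hull Q \<inter> {x. a \<bullet> x = b}"
proof (rule affine_dim_equal)
  let ?L = "affine hull Q \<inter> {x. a \<bullet> x = b}"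
  have F: "F \<noteq> {}" "F \<noteq> Q" "aff_dim F = aff_dim Q - 1"
    using assms(1) by (auto simp: facet_of_def)
  show "affine ?L"
    by (simp add: affine_Int affine_hyperplane)
  show "affine hull F \<subseteq> ?L"
    using assms(3) by (intro hull_minimal \<open>affine ?L\<close>) (auto intro: hull_inc)
  show "affine (affine hull F)" "affine hull F \<noteq> {}"
    using F(1) by simp_all
  obtain u where u: "u \<in> Q" "u \<notin> F"
    using F(2) facet_of_imp_subset[OF assms(1)] by blast
  then have "u \<in> affine hull Q" "u \<notin> ?L"
    using assms(3) hull_inc by fastforce+
  moreover have "?L \<subseteq> affine hull Q"
    by blast
  ultimately have "affine hull ?L \<subset> affine hull Q"
    using hull_same[of affine ?L] \<open>affine ?L\<close> by blast
  then have "aff_dim ?L < aff_dim Q"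
    by (rule aff_dim_psubset)
  moreover have "aff_dim F \<le> aff_dim ?L"
    using aff_dim_subset[OF \<open>affine hull F \<subseteq> ?L\<close>] by simp
  ultimately show "aff_dim (affine hull F) = aff_dim ?L"
    using F by simp
qed

lemma aff_dim_facet_hyperplane:
  fixes Q :: "'a::euclidean_space set"
  assumes "F facet_of Q" "Q \<subseteq> {x. a \<bullet> x \<le> b}" "F = Q \<inter> {x. a \<bullet> x = b}"
  shows "aff_dim (affine hull Q \<inter> {x. a \<bullet> x = b}) = aff_dim Q - 1"
  using affine_hull_facet[OF assms] assms(1) by (metis aff_dim_affine_hull facet_of_def)

lemma rel_interior_subset_facet_halfspace:
  fixes Q :: "'a::euclidean_space set"
  assumes F: "F facet_of Q" and ab: "Q \<subseteq> {x. a \<bullet> x \<le> b}" "F = Q \<inter> {x. a \<bullet> x = b}"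
  shows "rel_interior Q \<subseteq> {x. a \<bullet> x < b}"
proof
  fix v assume v: "v \<in> rel_interior Q"
  have "F \<inter> rel_interior Q = {}"
    using F by (intro face_of_disjoint_rel_interior facet_of_imp_face_of) auto
  then have "v \<notin> F"
    using v by blast
  moreover have "v \<in> Q"
    using v rel_interior_subset by blast
  ultimately have "a \<bullet> v \<le> b" "a \<bullet> v \<noteq> b"
    using ab by blast+
  then show "v \<in> {x. a \<bullet> x < b}"
    by simp
qed

lemma facet_supporting_hyperplanes_proportional:
  fixes Q :: "'a::euclidean_space set"
  assumes F: "F facet_of Q"
    and ab: "Q \<subseteq> {x. a \<bullet> x \<le> b}" "F = Q \<inter> {x. a \<bullet> x = b}"
    and ab': "Q \<subseteq> {x. a' \<bullet> x \<le> b'}" "F = Q \<inter> {x. a' \<bullet> x = b'}"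
  shows "\<exists>l>0. \<forall>v\<in>affine hull Q. a \<bullet> v - b = l * (a' \<bullet> v - b')"
proof -
  obtain q where q: "q \<in> F"
    using F by (auto simp: facet_of_def)
  have "F \<noteq> Q" "F \<subseteq> Q"
    using F facet_of_irrefl facet_of_imp_subset by blast+
  then obtain u where u: "u \<in> Q" "u \<notin> F"
    by blast
  have "a \<bullet> q = b" "a' \<bullet> q = b'" "q \<in> affine hull Q"
    using q ab ab' by (auto intro: hull_inc)
  have "a \<bullet> u < b" "a' \<bullet> u < b'" "u \<in> affine hull Q"
    using u ab ab' by (auto intro: hull_inc simp: less_le)
  define l where "l = (a \<bullet> u - b) / (a' \<bullet> u - b')"
  have "a \<bullet> v - b = l * (a' \<bullet> v - b')" if v: "v \<in> affine hull Q" for v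
  proof -
    define t where "t = (a' \<bullet> v - b') / (a' \<bullet> u - b')"
    define v' where "v' = v + t *\<^sub>R (q - u)"
    have "t * (a' \<bullet> u - b') = a' \<bullet> v - b'"
      using \<open>a' \<bullet> u < b'\<close> by (simp add: t_def)
    then have "a' \<bullet> v' = b'"
      using \<open>a' \<bullet> q = b'\<close> by (simp add: v'_def inner_add_right inner_diff_right algebra_simps)
    moreover have "v' \<in> affine hull Q"
      unfolding v'_def using v \<open>q \<in> affine hull Q\<close> \<open>u \<in> affine hull Q\<close>
      by (intro mem_affine_3_minus) auto
    ultimately have "v' \<in> affine hull F"
      using affine_hull_facet[OF F ab'] by blast
    also have "\<dots> \<subseteq> {x. a \<bullet> x = b}"
      using ab(2) by (intro hull_minimal affine_hyperplane) auto
    finally have "a \<bullet> v + t * (b - a \<bullet> u) = b"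
      using \<open>a \<bullet> q = b\<close> by (simp add: v'_def inner_add_right inner_diff_right algebra_simps)
    then show ?thesis
      using \<open>a' \<bullet> u < b'\<close> by (simp add: l_def t_def field_simps)
  qed
  moreover have "l > 0"
    unfolding l_def using \<open>a \<bullet> u < b\<close> \<open>a' \<bullet> u < b'\<close> by (intro divide_neg_neg) auto
  ultimately show ?thesis
    by blast
qed

lemma polyhedron_violated_facet:
  fixes Q :: "'a::euclidean_space set"
  assumes "polyhedron Q" "z \<in> affine hull Q" "z \<notin> Q"
  obtains F a b where "F facet_of Q" "Q \<subseteq> {x. a \<bullet> x \<le> b}" "F = Q \<inter> {x. a \<bullet> x = b}"
    "a \<bullet> z > b"
proof -
  obtain H where H: "finite H" "Q = affine hull Q \<inter> \<Inter>H"
    and Hhalf: "\<forall>h\<in>H. \<exists>a b. a \<noteq> 0 \<and> h = {x. a \<bullet> x \<le> b}"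
    and Hmin: "\<forall>H'. H' \<subset> H \<longrightarrow> Q \<subset> affine hull Q \<inter> \<Inter>H'"
    using assms(1) unfolding polyhedron_Int_affine_minimal by blast
  obtain a b where ab: "\<forall>h\<in>H. a h \<noteq> 0 \<and> h = {x. a h \<bullet> x \<le> b h}"
    using Hhalf by (metis (no_types))
  have "z \<notin> affine hull Q \<inter> \<Inter>H"
    using H(2) assms(3) by metis
  then have "z \<notin> \<Inter>H"
    using assms(2) by blast
  then obtain h where h: "h \<in> H" "z \<notin> h"
    by blast
  define c d where "c = a h" and "d = b h"
  have h_eq: "h = {x. c \<bullet> x \<le> d}"
    using ab h(1) by (simp add: c_def d_def)
  show thesis
  proof (rule that)
    show "Q \<inter> {x. c \<bullet> x = d} facet_of Q"
      unfolding c_def d_def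
      using facet_of_polyhedron_explicit[OF H ab[rule_format] Hmin[rule_format]] h(1) by blast
    show "Q \<subseteq> {x. c \<bullet> x \<le> d}"
      using H(2) h(1) h_eq by (metis Inf_lower Int_lower2 subset_trans)
    show "c \<bullet> z > d"
      using h(2) h_eq by auto
  qed simp
qed

section \<open>Simplices and the polytope \<open>P_G\<close>\<close>

definition indvec :: "'n::finite set \<Rightarrow> real^'n" where
  "indvec S = (\<chi> k. if k \<in> S then 1 else 0)"

lemma inner_indvec: "indvec S \<bullet> x = (\<Sum>k\<in>S. x $ k)"
proof -
  have "indvec S \<bullet> x = (\<Sum>k\<in>UNIV. if k \<in> S then x $ k else 0)"
    unfolding inner_vec_def indvec_def by (intro sum.cong) auto
  then show ?thesis
    by (simp add: sum.If_cases)
qed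

lemma inner_indvec_add_axis:
  "indvec S \<bullet> (p + axis k 1) = indvec S \<bullet> p + (if k \<in> S then 1 else 0)"
  by (simp add: inner_add_right indvec_def inner_axis)

lemma Hyp_eq: "Hyp m y = {x::real^'n::finite. indvec UNIV \<bullet> x = real (\<Sum>j\<in>{1..m}. y j)}"
  by (simp add: Hyp_def inner_indvec)

lemma aff_dim_Hyp: "aff_dim (Hyp m y :: (real^'n::finite) set) = int CARD('n) - 1"
proof -
  have "indvec (UNIV :: 'n set) \<noteq> 0"
    by (simp add: indvec_def vec_eq_iff)
  then show ?thesis
    unfolding Hyp_eq by simp
qed

lemma Hyp_not_subset_level:
  fixes S :: "'n::finite set"
  assumes "S \<noteq> {}" "S \<noteq> UNIV"
  shows "\<not> Hyp m y \<subseteq> {x. indvec S \<bullet> x = r}"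
proof
  assume sub: "Hyp m y \<subseteq> {x. indvec S \<bullet> x = r}"
  obtain k j where "k \<in> S" "j \<notin> S"
    using assms by blast
  define h where "h = real (\<Sum>j\<in>{1..m}. y j) *\<^sub>R axis j (1::real)"
  have "h \<in> Hyp m y" "h + (axis k 1 - axis j 1) \<in> Hyp m y"
    by (simp_all add: Hyp_eq h_def indvec_def inner_axis inner_add_right inner_diff_right)
  moreover have "indvec S \<bullet> (h + (axis k 1 - axis j 1)) = indvec S \<bullet> h + 1"
    using \<open>k \<in> S\<close> \<open>j \<notin> S\<close> by (simp add: indvec_def inner_axis inner_add_right inner_diff_right)
  ultimately have "indvec S \<bullet> h = r" "indvec S \<bullet> h + 1 = r"
    using sub by auto
  then show False
    by simp
qed

lemma simplexI_subset:
  "simplexI J \<subseteq> {s. (\<forall>k. 0 \<le> s $ k) \<and> (\<forall>k. k \<notin> J \<longrightarrow> s $ k = 0) \<and> (\<Sum>k\<in>UNIV. s $ k) = 1}"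
  (is "_ \<subseteq> ?T")
  unfolding simplexI_def
proof (rule hull_minimal)
  show "{axis k 1 | k. k \<in> J} \<subseteq> ?T"
    by (auto simp: axis_def)
  show "convex ?T"
    unfolding convex_def by (auto simp: sum.distrib sum_distrib_left[symmetric])
qed

lemma axis_in_simplexI: "k \<in> J \<Longrightarrow> axis k 1 \<in> simplexI J"
  unfolding simplexI_def by (rule hull_inc) blast

lemma inner_indvec_simplexI:
  assumes "s \<in> simplexI J"
  shows "0 \<le> indvec S \<bullet> s" "indvec S \<bullet> s \<le> 1" "J \<inter> S = {} \<Longrightarrow> indvec S \<bullet> s = 0"
    "indvec UNIV \<bullet> s = 1"
proof -
  have s: "\<forall>k. 0 \<le> s $ k" "\<forall>k. k \<notin> J \<longrightarrow> s $ k = 0" "(\<Sum>k\<in>UNIV. s $ k) = 1"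
    using simplexI_subset assms by auto
  then show "0 \<le> indvec S \<bullet> s" "indvec UNIV \<bullet> s = 1"
    by (simp_all add: inner_indvec sum_nonneg)
  have "(\<Sum>k\<in>S. s $ k) \<le> (\<Sum>k\<in>UNIV. s $ k)"
    using s(1) by (intro sum_mono2) auto
  then show "indvec S \<bullet> s \<le> 1"
    using s(3) by (simp add: inner_indvec)
  show "indvec S \<bullet> s = 0" if "J \<inter> S = {}"
    using s(2) that unfolding inner_indvec by (intro sum.neutral) auto
qed

lemma inner_le_Max_simplexI:
  assumes "s \<in> simplexI J"
  shows "a \<bullet> s \<le> Max (range (($) a))"
proof -
  have s: "\<forall>k. 0 \<le> s $ k" "(\<Sum>k\<in>UNIV. s $ k) = 1"
    using simplexI_subset assms by auto
  have "a \<bullet> s = (\<Sum>k\<in>UNIV. a $ k * s $ k)"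
    by (simp add: inner_vec_def)
  also have "\<dots> \<le> (\<Sum>k\<in>UNIV. Max (range (($) a)) * s $ k)"
    using s by (intro sum_mono mult_right_mono) auto
  also have "\<dots> = Max (range (($) a))"
    using s by (simp add: sum_distrib_left[symmetric])
  finally show ?thesis .
qed

lemma inner_eq_Max_simplexI:
  assumes "s \<in> simplexI J" and eq: "a \<bullet> s = Max (range (($) a))"
  shows "indvec {k. a $ k = Max (range (($) a))} \<bullet> s = 1"
proof -
  define M where "M = Max (range (($) a))"
  have s: "\<forall>k. 0 \<le> s $ k" "(\<Sum>k\<in>UNIV. s $ k) = 1"
    using simplexI_subset assms(1) by auto
  have aM: "a $ k \<le> M" for k
    unfolding M_def by (rule Max_ge) auto
  have "(\<Sum>k\<in>UNIV. s $ k * (M - a $ k)) = M * (\<Sum>k\<in>UNIV. s $ k) - a \<bullet> s"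
    by (simp add: inner_vec_def algebra_simps sum_subtractf sum_distrib_left)
  also have "\<dots> = 0"
    using s eq by (simp add: M_def)
  finally have "\<forall>k\<in>UNIV. s $ k * (M - a $ k) = 0"
    using s aM by (subst sum_nonneg_eq_0_iff[symmetric]) auto
  then have "s $ k = 0" if "a $ k \<noteq> M" for k
    using that by auto
  then have "(\<Sum>k\<in>{k. a $ k = M}. s $ k) = (\<Sum>k\<in>UNIV. s $ k)"
    by (intro sum.mono_neutral_left) auto
  then show ?thesis
    using s by (simp add: inner_indvec M_def)
qed

lemma PG_memE:
  assumes "v \<in> PG m I y"
  obtains s where "\<forall>i\<in>{1..m}. s i \<in> simplexI (I i)" "v = (\<Sum>i\<in>{1..m}. real (y i) *\<^sub>R s i)"
proof -
  obtain z where v: "v = (\<Sum>i\<in>{1..m}. z i)"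
    and z: "\<forall>i\<in>{1..m}. z i \<in> (\<lambda>v. real (y i) *\<^sub>R v) ` simplexI (I i)"
    using assms unfolding PG_def by blast
  then have "\<forall>i\<in>{1..m}. \<exists>s. s \<in> simplexI (I i) \<and> z i = real (y i) *\<^sub>R s"
    by blast
  then obtain s where s: "\<forall>i\<in>{1..m}. s i \<in> simplexI (I i) \<and> z i = real (y i) *\<^sub>R s i"
    by metis
  then have "v = (\<Sum>i\<in>{1..m}. real (y i) *\<^sub>R s i)"
    unfolding v by (intro sum.cong) auto
  then show thesis
    using that s by blast
qed

lemma PG_memI:
  "\<forall>i\<in>{1..m}. s i \<in> simplexI (I i) \<Longrightarrow> (\<Sum>i\<in>{1..m}. real (y i) *\<^sub>R s i) \<in> PG m I y"
  unfolding PG_def by blast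

lemma PG_exchange_summand:
  assumes s: "\<forall>j\<in>{1..m}. s j \<in> simplexI (I j)" and "i \<in> {1..m}" "t \<in> simplexI (I i)"
  shows "(\<Sum>j\<in>{1..m}. real (y j) *\<^sub>R s j) + real (y i) *\<^sub>R (t - s i) \<in> PG m I y"
proof -
  have "(\<Sum>j\<in>{1..m}. real (y j) *\<^sub>R (s(i := t)) j)
      = (\<Sum>j\<in>{1..m}. real (y j) *\<^sub>R s j) + real (y i) *\<^sub>R (t - s i)"
    using \<open>i \<in> {1..m}\<close> by (simp add: sum.remove scaleR_diff_right)
  moreover have "\<forall>j\<in>{1..m}. (s(i := t)) j \<in> simplexI (I j)"
    using s \<open>t \<in> simplexI (I i)\<close> by simp
  ultimately show ?thesis
    by (metis PG_memI)
qed

lemma polytope_PG: "polytope (PG m I y)"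
proof -
  define V where "V i = {axis k (1::real) | k. k \<in> I i}" for i
  have "finite (V i)" for i
    unfolding V_def by (simp add: setcompr_eq_image)
  have "PG m I y = (\<Sum>i\<in>{1..m}. (\<lambda>v. real (y i) *\<^sub>R v) ` (convex hull V i))"
    unfolding PG_def simplexI_def V_def by (simp add: set_sum_alt)
  also have "\<dots> = convex hull (\<Sum>i\<in>{1..m}. (\<lambda>v. real (y i) *\<^sub>R v) ` V i)"
    by (simp add: convex_hull_set_sum convex_hull_scaling)
  finally show ?thesis
    using \<open>\<And>i. finite (V i)\<close> by (simp add: polytope_convex_hull finite_set_sum)
qed

lemma PG_subset_Hyp: "PG m I y \<subseteq> Hyp m y"
proof
  fix v assume "v \<in> PG m I y"
  then obtain s where s: "\<forall>i\<in>{1..m}. s i \<in> simplexI (I i)"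
    and v: "v = (\<Sum>i\<in>{1..m}. real (y i) *\<^sub>R s i)"
    by (rule PG_memE)
  have "indvec UNIV \<bullet> v = (\<Sum>i\<in>{1..m}. real (y i) * (indvec UNIV \<bullet> s i))"
    unfolding v by (simp add: inner_sum_right)
  also have "\<dots> = (\<Sum>i\<in>{1..m}. real (y i))"
  proof (intro sum.cong refl)
    fix i assume "i \<in> {1..m}"
    then show "real (y i) * (indvec UNIV \<bullet> s i) = real (y i)"
      using s inner_indvec_simplexI(4) by (metis mult.right_neutral)
  qed
  finally show "v \<in> Hyp m y"
    unfolding Hyp_eq by simp
qed

lemma affine_hull_PG:
  assumes "aff_dim (PG m I y) = int CARD('n) - 1"
  shows "affine hull (PG m I y) = (Hyp m y :: (real^'n::finite) set)"
proof (rule affine_dim_equal)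
  show "affine (Hyp m y :: (real^'n) set)"
    unfolding Hyp_eq by (rule affine_hyperplane)
  then show "affine hull PG m I y \<subseteq> Hyp m y"
    using PG_subset_Hyp by (rule hull_minimal[rotated])
  show "affine hull PG m I y \<noteq> {}"
    using assms by auto
  show "aff_dim (affine hull PG m I y) = aff_dim (Hyp m y :: (real^'n) set)"
    using assms by (simp add: aff_dim_Hyp)
qed simp

section \<open>The facets of \<open>P_G\<close>\<close>

definition nbhd_weight :: "nat \<Rightarrow> (nat \<Rightarrow> 'n::finite set) \<Rightarrow> (nat \<Rightarrow> nat) \<Rightarrow> 'n set \<Rightarrow> real" where
  "nbhd_weight m I y S = (\<Sum>i\<in>{i\<in>{1..m}. I i \<inter> S \<noteq> {}}. real (y i))"

lemma nbhd_weight_eq_sum_if: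
  "nbhd_weight m I y S = (\<Sum>i\<in>{1..m}. if I i \<inter> S \<noteq> {} then real (y i) else 0)"
  unfolding nbhd_weight_def by (rule sum.inter_filter) simp

lemma nbhd_weight_nonneg: "0 \<le> nbhd_weight m I y S"
  unfolding nbhd_weight_def by (rule sum_nonneg) simp

lemma nbhd_weight_le_total: "nbhd_weight m I y S \<le> real (\<Sum>j\<in>{1..m}. y j)"
  unfolding nbhd_weight_def of_nat_sum by (rule sum_mono2) auto

lemma nbhd_weight_in_Ints: "nbhd_weight m I y S \<in> \<int>"
  unfolding nbhd_weight_def by (intro Ints_sum Ints_of_nat)

lemma PG_inner_indvec_le:
  assumes "v \<in> PG m I y"
  shows "indvec S \<bullet> v \<le> nbhd_weight m I y S"
proof -
  obtain s where s: "\<forall>i\<in>{1..m}. s i \<in> simplexI (I i)"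
    and v: "v = (\<Sum>i\<in>{1..m}. real (y i) *\<^sub>R s i)"
    using assms by (rule PG_memE)
  have "indvec S \<bullet> v = (\<Sum>i\<in>{1..m}. real (y i) * (indvec S \<bullet> s i))"
    unfolding v by (simp add: inner_sum_right)
  also have "\<dots> \<le> (\<Sum>i\<in>{1..m}. if I i \<inter> S \<noteq> {} then real (y i) else 0)"
  proof (rule sum_mono)
    fix i assume "i \<in> {1..m}"
    then show "real (y i) * (indvec S \<bullet> s i) \<le> (if I i \<inter> S \<noteq> {} then real (y i) else 0)"
      using s inner_indvec_simplexI[of "s i" "I i"] by (auto intro: mult_left_le)
  qed
  finally show ?thesis
    by (simp add: nbhd_weight_eq_sum_if)
qed

text \<open>Moving one summand to a vertex of its simplex where \<open>a\<close> is largest cannot increase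
  \<open>a\<close> beyond its maximum, so every summand with positive weight is already supported there.\<close>

lemma PG_argmax_level:
  fixes a :: "real^'n::finite"
  defines "S \<equiv> {k. a $ k = Max (range (($) a))}"
  assumes x: "x \<in> PG m I y" and max: "\<forall>v\<in>PG m I y. a \<bullet> v \<le> a \<bullet> x"
  shows "indvec S \<bullet> x = nbhd_weight m I y S"
proof -
  define M where "M = Max (range (($) a))"
  obtain s where s: "\<forall>i\<in>{1..m}. s i \<in> simplexI (I i)"
    and x_eq: "x = (\<Sum>i\<in>{1..m}. real (y i) *\<^sub>R s i)"
    using x by (rule PG_memE)
  have summand: "real (y i) * (indvec S \<bullet> s i) = (if I i \<inter> S \<noteq> {} then real (y i) else 0)"
    if i: "i \<in> {1..m}" for i
  proof (cases "I i \<inter> S = {}")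
    case True
    then show ?thesis
      using inner_indvec_simplexI(3)[OF s[rule_format, OF i] True] by simp
  next
    case False
    then obtain k where k: "k \<in> I i" "a $ k = M"
      unfolding S_def M_def by blast
    have "x + real (y i) *\<^sub>R (axis k 1 - s i) \<in> PG m I y"
      unfolding x_eq using s i axis_in_simplexI[OF k(1)] by (rule PG_exchange_summand)
    then have "a \<bullet> (x + real (y i) *\<^sub>R (axis k 1 - s i)) \<le> a \<bullet> x"
      using max by blast
    then have "real (y i) * (M - a \<bullet> s i) \<le> 0"
      using k(2) by (simp add: inner_add_right inner_diff_right inner_axis)
    moreover have "a \<bullet> s i \<le> M"
      unfolding M_def by (rule inner_le_Max_simplexI[OF s[rule_format, OF i]])
    ultimately have "y i = 0 \<or> a \<bullet> s i = M"
      by (cases "y i = 0") (simp_all add: mult_le_0_iff)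
    then show ?thesis
      using False inner_eq_Max_simplexI[of "s i" "I i" a] s i unfolding S_def M_def by auto
  qed
  have "indvec S \<bullet> x = (\<Sum>i\<in>{1..m}. real (y i) * (indvec S \<bullet> s i))"
    unfolding x_eq by (simp add: inner_sum_right)
  also have "\<dots> = nbhd_weight m I y S"
    unfolding nbhd_weight_eq_sum_if using summand by (rule sum.cong[OF refl])
  finally show ?thesis .
qed

lemma PG_not_subset_level:
  fixes S :: "'n::finite set"
  assumes aff: "aff_dim (PG m I y) = int CARD('n) - 1" and "S \<noteq> {}" "S \<noteq> UNIV"
  shows "\<not> PG m I y \<subseteq> {x. indvec S \<bullet> x = r}"
proof
  assume "PG m I y \<subseteq> {x. indvec S \<bullet> x = r}"
  then have "affine hull PG m I y \<subseteq> {x. indvec S \<bullet> x = r}"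
    by (intro hull_minimal affine_hyperplane)
  then show False
    using affine_hull_PG[OF aff] Hyp_not_subset_level[OF assms(2,3)] by auto
qed

lemma PG_facet_normal_not_multiple_ones:
  assumes F: "F facet_of PG m I y"
    and ab: "PG m I y \<subseteq> {x. a \<bullet> x \<le> b}" "F = PG m I y \<inter> {x. a \<bullet> x = b}"
  shows "a \<noteq> r *\<^sub>R indvec UNIV"
proof
  assume "a = r *\<^sub>R indvec UNIV"
  then have const: "a \<bullet> v = r * real (\<Sum>j\<in>{1..m}. y j)" if "v \<in> PG m I y" for v
    using PG_subset_Hyp that unfolding Hyp_eq by auto
  obtain x0 where "x0 \<in> F"
    using F by (auto simp: facet_of_def)
  then have "F = PG m I y"
    using ab const by auto
  then show False
    using F by simp
qed

lemma facet_of_PGE: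
  fixes I :: "nat \<Rightarrow> 'n::finite set"
  assumes aff: "aff_dim (PG m I y) = int CARD('n) - 1" and F: "F facet_of PG m I y"
  obtains S where "S \<noteq> {}" "S \<noteq> UNIV" "F = PG m I y \<inter> {x. indvec S \<bullet> x = nbhd_weight m I y S}"
proof -
  let ?Q = "PG m I y"
  obtain a b where ab: "?Q \<subseteq> {x. a \<bullet> x \<le> b}" "F = ?Q \<inter> {x. a \<bullet> x = b}"
    using facet_of_polyhedron[OF polytope_imp_polyhedron[OF polytope_PG] F] by blast
  define M where "M = Max (range (($) a))"
  define S where "S = {k. a $ k = M}"
  define G where "G = ?Q \<inter> {x. indvec S \<bullet> x = nbhd_weight m I y S}"
  have "M \<in> range (($) a)"
    unfolding M_def by (rule Max_in) auto
  then have "S \<noteq> {}"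
    unfolding S_def by auto
  have "F \<subseteq> G"
  proof
    fix x assume "x \<in> F"
    then have "x \<in> ?Q" "\<forall>v\<in>?Q. a \<bullet> v \<le> a \<bullet> x"
      using ab by auto
    then show "x \<in> G"
      unfolding G_def S_def M_def using PG_argmax_level by blast
  qed
  have "S \<noteq> UNIV"
  proof
    assume "S = UNIV"
    then have "a = M *\<^sub>R indvec UNIV"
      unfolding S_def by (auto simp: vec_eq_iff indvec_def)
    then show False
      using PG_facet_normal_not_multiple_ones[OF F ab] by blast
  qed
  have "G \<noteq> ?Q"
    using PG_not_subset_level[OF aff \<open>S \<noteq> {}\<close> \<open>S \<noteq> UNIV\<close>] unfolding G_def by blast
  moreover have "G face_of ?Q"
    unfolding G_def
    by (intro face_of_Int_supporting_hyperplane_le polytope_imp_convex polytope_PG)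
      (simp add: PG_inner_indvec_le)
  ultimately have "F = G"
    using facet_of_eq_face[OF polytope_imp_convex[OF polytope_PG] F] \<open>F \<subseteq> G\<close> by blast
  then show thesis
    using that \<open>S \<noteq> {}\<close> \<open>S \<noteq> UNIV\<close> unfolding G_def by blast
qed

lemma PG_facet_exceeds_level:
  fixes I :: "nat \<Rightarrow> 'n::finite set"
  assumes aff: "aff_dim (PG m I y) = int CARD('n) - 1" and F: "F facet_of PG m I y"
    and FS: "F = PG m I y \<inter> {x. indvec S \<bullet> x = nbhd_weight m I y S}"
    and ab: "PG m I y \<subseteq> {x. a \<bullet> x \<le> b}" "F = PG m I y \<inter> {x. a \<bullet> x = b}"
    and v: "v \<in> Hyp m y" "a \<bullet> v > b"
  shows "indvec S \<bullet> v > nbhd_weight m I y S"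
proof -
  have "PG m I y \<subseteq> {x. indvec S \<bullet> x \<le> nbhd_weight m I y S}"
    using PG_inner_indvec_le by blast
  then obtain l where "l > 0" "a \<bullet> v - b = l * (indvec S \<bullet> v - nbhd_weight m I y S)"
    using facet_supporting_hyperplanes_proportional[OF F ab _ FS] affine_hull_PG[OF aff] v(1)
    by blast
  moreover have "0 < l * (indvec S \<bullet> v - nbhd_weight m I y S)"
    using calculation v(2) by linarith
  ultimately show ?thesis
    by (simp add: zero_less_mult_iff)
qed

lemma PG_violated_facetE:
  fixes I :: "nat \<Rightarrow> 'n::finite set"
  assumes aff: "aff_dim (PG m I y) = int CARD('n) - 1"
    and z: "z \<in> Hyp m y" "z \<notin> PG m I y"
  obtains S where "S \<noteq> {}" "S \<noteq> UNIV"
    "PG m I y \<inter> {x. indvec S \<bullet> x = nbhd_weight m I y S} facet_of PG m I y"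
    "indvec S \<bullet> z > nbhd_weight m I y S"
proof -
  obtain F a b where F: "F facet_of PG m I y"
    and ab: "PG m I y \<subseteq> {x. a \<bullet> x \<le> b}" "F = PG m I y \<inter> {x. a \<bullet> x = b}" "a \<bullet> z > b"
    using polyhedron_violated_facet[OF polytope_imp_polyhedron[OF polytope_PG]] z
      affine_hull_PG[OF aff] by blast
  obtain S where S: "S \<noteq> {}" "S \<noteq> UNIV"
    and FS: "F = PG m I y \<inter> {x. indvec S \<bullet> x = nbhd_weight m I y S}"
    using facet_of_PGE[OF aff F] by blast
  have "indvec S \<bullet> z > nbhd_weight m I y S"
    using PG_facet_exceeds_level[OF aff F FS ab(1,2) z(1) ab(3)] .
  then show thesis
    using that S F FS by blast
qed

section \<open>Negative facets and good points\<close>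

lemma inner_indvec_infty1:
  fixes k1 :: "'n::finite"
  shows "indvec S \<bullet> infty1 m y c k1 = (if k1 \<in> S
     then real (\<Sum>j\<in>{1..m}. y j) + (real CARD('n) - real (card S)) * c
     else - c * real (card S))"
proof (cases "k1 \<in> S")
  case True
  then have "card S \<ge> 1"
    by (metis card_0_eq empty_iff finite less_one not_le)
  have "indvec S \<bullet> infty1 m y c k1 = infty1 m y c k1 $ k1 + (\<Sum>k\<in>S - {k1}. infty1 m y c k1 $ k)"
    using True by (simp add: inner_indvec sum.remove)
  also have "(\<Sum>k\<in>S - {k1}. infty1 m y c k1 $ k) = (\<Sum>k\<in>S - {k1}. - c)"
    by (intro sum.cong) (auto simp: infty1_def)
  finally show ?thesis
    using True \<open>card S \<ge> 1\<close> by (simp add: infty1_def card_Diff_singleton of_nat_diff algebra_simps)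
next
  case False
  then have "(\<Sum>k\<in>S. infty1 m y c k1 $ k) = (\<Sum>k\<in>S. - c)"
    by (intro sum.cong) (auto simp: infty1_def)
  then show ?thesis
    using False by (simp add: inner_indvec)
qed

lemma infty1_in_Hyp: "infty1 m y c k1 \<in> Hyp m y"
  by (simp add: Hyp_eq inner_indvec_infty1)

lemma negative_facet_PG_iff:
  fixes I :: "nat \<Rightarrow> 'n::finite set" and k1 :: 'n
  assumes aff: "aff_dim (PG m I y) = int CARD('n) - 1" and "c > 0"
    and F: "F facet_of PG m I y" and "S \<noteq> UNIV"
    and FS: "F = PG m I y \<inter> {x. indvec S \<bullet> x = nbhd_weight m I y S}"
  shows "negative_facet (Hyp m y) (infty1 m y c k1) (PG m I y) F \<longleftrightarrow> k1 \<in> S"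
proof
  assume "negative_facet (Hyp m y) (infty1 m y c k1) (PG m I y) F"
  then obtain a b where ab: "PG m I y \<subseteq> {x. a \<bullet> x \<le> b}" "F = PG m I y \<inter> {x. a \<bullet> x = b}"
    and "a \<bullet> infty1 m y c k1 > b"
    unfolding negative_facet_def by blast
  then have "indvec S \<bullet> infty1 m y c k1 > nbhd_weight m I y S"
    using PG_facet_exceeds_level[OF aff F FS ab infty1_in_Hyp] by blast
  moreover have "0 \<le> c * real (card S)"
    using \<open>c > 0\<close> by simp
  ultimately show "k1 \<in> S"
    using nbhd_weight_nonneg[of m I y S] by (auto simp: inner_indvec_infty1 split: if_splits)
next
  assume "k1 \<in> S"
  let ?f = "nbhd_weight m I y S"
  have bound: "PG m I y \<subseteq> {x. indvec S \<bullet> x \<le> ?f}"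
    using PG_inner_indvec_le by blast
  have "aff_dim (Hyp m y \<inter> {x. indvec S \<bullet> x = ?f}) = aff_dim (Hyp m y :: (real^'n) set) - 1"
    using aff_dim_facet_hyperplane[OF F bound FS] affine_hull_PG[OF aff]
    by (metis aff_dim_affine_hull)
  moreover have "rel_interior (PG m I y) \<subseteq> {x. indvec S \<bullet> x < ?f}"
    by (rule rel_interior_subset_facet_halfspace[OF F bound FS])
  moreover have "indvec S \<bullet> infty1 m y c k1 > ?f"
  proof -
    have "card S < CARD('n)"
      using \<open>S \<noteq> UNIV\<close> by (intro psubset_card_mono) auto
    then have "real (\<Sum>j\<in>{1..m}. y j) + c \<le> indvec S \<bullet> infty1 m y c k1"
      using \<open>k1 \<in> S\<close> \<open>c > 0\<close> by (simp add: inner_indvec_infty1 mult_le_cancel_right1)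
    then show ?thesis
      using nbhd_weight_le_total[of m I y S] \<open>c > 0\<close> by linarith
  qed
  ultimately show "negative_facet (Hyp m y) (infty1 m y c k1) (PG m I y) F"
    unfolding negative_facet_def using F bound FS by blast
qed

lemma PG_trim_iff: "p \<in> PG_trim m I y \<longleftrightarrow> (\<forall>k. p + axis k 1 \<in> PG m I y)"
proof
  assume "p \<in> PG_trim m I y"
  then show "\<forall>k. p + axis k 1 \<in> PG m I y"
    unfolding PG_trim_def using axis_in_simplexI[of _ UNIV] by blast
next
  assume "\<forall>k. p + axis k 1 \<in> PG m I y"
  then have "convex hull ((\<lambda>v. p + v) ` {axis k 1 | k. k \<in> UNIV}) \<subseteq> PG m I y"
    by (intro hull_minimal polytope_imp_convex polytope_PG) auto
  then show "p \<in> PG_trim m I y"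
    unfolding PG_trim_def simplexI_def convex_hull_translation by blast
qed

lemma good_point_if_translates_in_PG:
  fixes I :: "nat \<Rightarrow> 'n::finite set" and k1 :: 'n
  assumes aff: "aff_dim (PG m I y) = int CARD('n) - 1" and "c > 0"
    and translates: "\<forall>k. p + axis k 1 \<in> PG m I y"
  shows "good_point (Hyp m y) (infty1 m y c k1) (PG m I y) (p + axis k1 1)"
  unfolding good_point_def
proof (intro conjI allI impI)
  show "p + axis k1 1 \<in> PG m I y"
    using translates by blast
  fix F assume "positive_facet (Hyp m y) (infty1 m y c k1) (PG m I y) F"
  then have F: "F facet_of PG m I y"
    and not_neg: "\<not> negative_facet (Hyp m y) (infty1 m y c k1) (PG m I y) F"
    unfolding positive_facet_def by auto
  obtain S where S: "S \<noteq> {}" "S \<noteq> UNIV"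
    and FS: "F = PG m I y \<inter> {x. indvec S \<bullet> x = nbhd_weight m I y S}"
    using facet_of_PGE[OF aff F] by blast
  have "k1 \<notin> S"
    using not_neg negative_facet_PG_iff[OF aff \<open>c > 0\<close> F S(2) FS] by blast
  obtain k where "k \<in> S"
    using S(1) by blast
  have "indvec S \<bullet> (p + axis k 1) \<le> nbhd_weight m I y S"
    using translates PG_inner_indvec_le by blast
  then have "indvec S \<bullet> (p + axis k1 1) < nbhd_weight m I y S"
    using \<open>k \<in> S\<close> \<open>k1 \<notin> S\<close> by (simp add: inner_indvec_add_axis)
  then show "p + axis k1 1 \<notin> F"
    using FS by auto
qed

lemma translates_in_PG_if_good_point:
  fixes I :: "nat \<Rightarrow> 'n::finite set" and k1 :: 'n
  assumes aff: "aff_dim (PG m I y) = int CARD('n) - 1" and "c > 0"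
    and p: "\<forall>k. p $ k \<in> \<int>"
    and good: "good_point (Hyp m y) (infty1 m y c k1) (PG m I y) (p + axis k1 1)"
  shows "p + axis k 1 \<in> PG m I y"
proof (rule ccontr)
  let ?x = "p + axis k1 1" and ?z = "p + axis k 1"
  assume "?z \<notin> PG m I y"
  have "?x \<in> PG m I y"
    using good unfolding good_point_def by blast
  then have "?x \<in> Hyp m y"
    using PG_subset_Hyp by blast
  then have "?z \<in> Hyp m y"
    by (simp add: Hyp_eq inner_indvec_add_axis)
  then obtain S where "S \<noteq> UNIV"
    and C: "PG m I y \<inter> {x. indvec S \<bullet> x = nbhd_weight m I y S} facet_of PG m I y"
    and z_gt: "indvec S \<bullet> ?z > nbhd_weight m I y S"
    using PG_violated_facetE[OF aff _ \<open>?z \<notin> PG m I y\<close>] by metis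
  have x_le: "indvec S \<bullet> ?x \<le> nbhd_weight m I y S"
    using \<open>?x \<in> PG m I y\<close> by (rule PG_inner_indvec_le)
  obtain i j where "indvec S \<bullet> p = of_int i" "nbhd_weight m I y S = of_int j"
    using Ints_sum p nbhd_weight_in_Ints unfolding inner_indvec by (metis Ints_cases)
  \<comment> \<open>\<open>i + [k \<in> S] > j \<ge> i + [k1 \<in> S]\<close> with \<open>i, j\<close> integers\<close>
  then have "k1 \<notin> S" "indvec S \<bullet> ?x = nbhd_weight m I y S"
    using z_gt x_le by (auto simp: inner_indvec_add_axis split: if_splits)
  moreover have "\<not> positive_facet (Hyp m y) (infty1 m y c k1) (PG m I y)
      (PG m I y \<inter> {x. indvec S \<bullet> x = nbhd_weight m I y S})"
    using good \<open>?x \<in> PG m I y\<close> calculation(2) unfolding good_point_def by blast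
  ultimately show False
    using negative_facet_PG_iff[OF aff \<open>c > 0\<close> C \<open>S \<noteq> UNIV\<close> refl] C
    unfolding positive_facet_def by blast
qed

theorem mainTheorem4:
  fixes m :: nat and I :: "nat \<Rightarrow> 'n::finite set" and y :: "nat \<Rightarrow> nat" and k1 :: 'n
  assumes "m \<ge> 1"
    and "\<forall>i\<in>{1..m}. I i \<noteq> {}"
    and "\<forall>k. \<exists>i\<in>{1..m}. k \<in> I i"
    and "aff_dim (PG m I y) = int CARD('n) - 1"
  shows "\<exists>c0. \<forall>c>c0. \<forall>p :: real^'n. (\<forall>k. p $ k \<in> \<int>) \<longrightarrow>
           (p \<in> PG_trim m I y \<longleftrightarrow>
            good_point (Hyp m y) (infty1 m y c k1) (PG m I y) (p + axis k1 1))"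
proof (intro exI[of _ 0] allI impI)
  fix c :: real and p :: "real^'n"
  assume "c > 0" and "\<forall>k. p $ k \<in> \<int>"
  then show "p \<in> PG_trim m I y \<longleftrightarrow> good_point (Hyp m y) (infty1 m y c k1) (PG m I y) (p + axis k1 1)"
    unfolding PG_trim_iff
    using good_point_if_translates_in_PG translates_in_PG_if_good_point assms(4) by blast
qed

end
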